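(* Let $\lambda>0$, $d_v>0$, $m=\lambda\pi d_v^2$, and suppose $\epsilon\ge d_v$. Then the range-vector localizability probability equals the localizability probability based on the number of visible landmarks: $$\mathbb P\big[\Delta_p(\mathbf R_{\mathbf 0},\mathbf R_{\mathbf x})>\epsilon\big]=\mathbb P[N_{\mathbf 0}\neq N_{\mathbf x}]=1-e^{-2m}I_0(2m).$$
   Context: Following the paper's model, the landmarks seen from the origin $\mathbf 0$ and those seen from a second location $\mathbf x\in\mathbb R^2$ are given by two independent homogeneous Poisson point processes $\Phi_{\mathbf 0}$ and $\Phi_{\mathbf x}$ on $\mathbb R^2$ of intensity $\lambda$. A landmark is visible from a location if its Euclidean distance to that location is at most $d_v$. $N_{\mathbf 0}$ (resp. $N_{\mathbf x}$) is the number of visible landmarks of $\Phi_{\mathbf 0}$ from $\mathbf 0$ (resp. of $\Phi_{\mathbf x}$ from $\mathbf x$). The range vector $\mathbf R_{\mathbf 0}\in\mathbb R^{N_{\mathbf 0}}$ lists the distances from $\mathbf 0$ to its visible landmarks ordered clockwise by bearing from a fixed reference direction; $\mathbf R_{\mathbf x}\in\mathbb R^{N_{\mathbf x}}$ is defined likewise relative to $\mathbf x$. For real vectors, $\Delta_p(\mathbf u,\mathbf v)=\|\mathbf u-\mathbf v\|_\infty$ if $\dim\mathbf u=\dim\mathbf v$ (equal to $0$ when both are empty) and $\infty$ otherwise. $I_0$ is the modified Bessel function of the first kind of order zero. *)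

theory Defs
  imports "HOL-Probability.Probability"
begin

text \<open>The plane R^2 is modelled by the type complex (a Euclidean space of dimension 2,
  with Lebesgue measure lborel).  A point configuration is a set of points.\<close>

definition bessel_I0 :: "real \<Rightarrow> real" where
  "bessel_I0 x = (\<Sum>k. (x / 2) ^ (2 * k) / (fact k) ^ 2)"

definition count_in :: "complex set \<Rightarrow> complex set \<Rightarrow> nat" where
  "count_in S B = card (S \<inter> B)"

definition homogeneous_PPP :: "'w measure \<Rightarrow> real \<Rightarrow> ('w \<Rightarrow> complex set) \<Rightarrow> bool" where
  "homogeneous_PPP M lam Phi \<longleftrightarrow>
     (\<forall>w\<in>space M. \<forall>B. bounded B \<longrightarrow> finite (Phi w \<inter> B)) \<and>
     (\<forall>B k. B \<in> sets lborel \<and> bounded B \<longrightarrow>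
        {w\<in>space M. count_in (Phi w) B = k} \<in> sets M \<and>
        measure M {w\<in>space M. count_in (Phi w) B = k}
          = exp (- lam * measure lborel B) * (lam * measure lborel B) ^ k / fact k) \<and>
     (\<forall>n (B :: nat \<Rightarrow> complex set) (k :: nat \<Rightarrow> nat).
        (\<forall>i<n. B i \<in> sets lborel \<and> bounded (B i)) \<and>
        (\<forall>i<n. \<forall>j<n. i \<noteq> j \<longrightarrow> B i \<inter> B j = {}) \<longrightarrow>
        measure M {w\<in>space M. \<forall>i<n. count_in (Phi w) (B i) = k i}
          = (\<Prod>i<n. measure M {w\<in>space M. count_in (Phi w) (B i) = k i}))"

text \<open>Events determined by the counts of Phi in finitely many bounded Borel sets
  (an intersection-stable generator of the sigma-algebra generated by Phi).\<close>
definition PPP_events :: "'w measure \<Rightarrow> ('w \<Rightarrow> complex set) \<Rightarrow> 'w set set" where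
  "PPP_events M Phi =
     {{w\<in>space M. \<forall>i<n. count_in (Phi w) (B i) = k i} | n (B :: nat \<Rightarrow> complex set) (k :: nat \<Rightarrow> nat).
        \<forall>i<n. B i \<in> sets lborel \<and> bounded (B i)}"

definition independent_PPs :: "'w measure \<Rightarrow> ('w \<Rightarrow> complex set) \<Rightarrow> ('w \<Rightarrow> complex set) \<Rightarrow> bool" where
  "independent_PPs M Phi Psi \<longleftrightarrow> prob_space.indep_set M (PPP_events M Phi) (PPP_events M Psi)"

definition visible :: "real \<Rightarrow> complex \<Rightarrow> complex set \<Rightarrow> complex set" where
  "visible dv p S = {y \<in> S. dist y p \<le> dv}"

definition num_visible :: "real \<Rightarrow> complex \<Rightarrow> complex set \<Rightarrow> nat" where
  "num_visible dv p S = card (visible dv p S)"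

text \<open>Clockwise bearing in [0, 2 pi) of the vector z, measured from the fixed reference
  direction with angle theta.\<close>
definition bearing :: "real \<Rightarrow> complex \<Rightarrow> real" where
  "bearing theta z = 2 * pi * frac ((theta - Arg z) / (2 * pi))"

text \<open>Range vector: distances from p to its visible landmarks, listed in clockwise order of
  bearing (ties, a null event, broken arbitrarily).\<close>
definition range_vector :: "real \<Rightarrow> real \<Rightarrow> complex \<Rightarrow> complex set \<Rightarrow> real list" where
  "range_vector theta dv p S =
     map (\<lambda>y. dist y p)
       (SOME ys. set ys = visible dv p S \<and> distinct ys \<and> sorted (map (\<lambda>y. bearing theta (y - p)) ys))"

definition Delta_p :: "real list \<Rightarrow> real list \<Rightarrow> ereal" where
  "Delta_p u v = (if length u = length v
                  then ereal (Max (insert 0 {\<bar>u ! i - v ! i\<bar> | i. i < length u}))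
                  else \<infinity>)"

end

theory Submission
  imports Defs
begin

text \<open>Every visible landmark is at distance at most d_v from its observer, so for
  eps >= d_v two range vectors of equal length are never more than eps apart, while
  vectors of different lengths are at distance infinity; hence the two events coincide.
  The numbers of visible landmarks are independent Poisson variables of mean
  m = lam pi d_v^2, so they agree with probability
  sum_k (exp(-m) m^k / k!)^2 = exp(-2m) I_0(2m).\<close>

lemma visible_eq_Int_cball: "visible dv p S = S \<inter> cball p dv"
  by (auto simp: visible_def dist_commute)

lemma num_visible_eq_count_in: "num_visible dv p S = count_in S (cball p dv)"
  by (simp add: num_visible_def count_in_def visible_eq_Int_cball)

lemma finite_visible_if_homogeneous_PPP:
  assumes "homogeneous_PPP M lam Phi" and "w \<in> space M"
  shows "finite (visible dv p (Phi w))"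
  using assms unfolding homogeneous_PPP_def visible_eq_Int_cball by (meson bounded_cball)

lemma range_vector_ordering:
  fixes theta :: real
  assumes "finite (visible dv p S)"
  defines "P \<equiv> \<lambda>ys. set ys = visible dv p S \<and> distinct ys
                      \<and> sorted (map (\<lambda>y. bearing theta (y - p)) ys)"
  shows "P (SOME ys. P ys)"
proof (rule someI_ex)
  obtain xs where "set xs = visible dv p S" "distinct xs"
    using finite_distinct_list[OF assms(1)] by blast
  then have "P (sort_key (\<lambda>y. bearing theta (y - p)) xs)"
    by (simp add: P_def)
  then show "\<exists>ys. P ys" ..
qed

lemma length_range_vector:
  assumes "finite (visible dv p S)"
  shows "length (range_vector theta dv p S) = num_visible dv p S"
  using range_vector_ordering[OF assms, of theta] distinct_card
  by (fastforce simp: range_vector_def num_visible_def)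

lemma set_range_vector_subset:
  assumes "finite (visible dv p S)"
  shows "set (range_vector theta dv p S) \<subseteq> {0..dv}"
  using range_vector_ordering[OF assms, of theta]
  by (auto simp: range_vector_def visible_def)

lemma Delta_p_le_if_same_length:
  assumes "length u = length v" and "set u \<subseteq> {0..d}" and "set v \<subseteq> {0..d}" and "0 \<le> d"
  shows "Delta_p u v \<le> ereal d"
proof -
  have "\<bar>u ! i - v ! i\<bar> \<le> d" if "i < length u" for i
  proof -
    have "u ! i \<in> {0..d}" "v ! i \<in> {0..d}"
      using that assms(1-3) nth_mem by (metis subsetD)+
    then show ?thesis by auto
  qed
  then have "Max (insert 0 {\<bar>u ! i - v ! i\<bar> | i. i < length u}) \<le> d"
    using \<open>0 \<le> d\<close> by (subst Max_le_iff) auto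
  then show ?thesis
    using assms(1) by (simp add: Delta_p_def)
qed

lemma Delta_p_gt_iff_length_neq:
  assumes "set u \<subseteq> {0..d}" and "set v \<subseteq> {0..d}" and "0 \<le> d" and "d \<le> eps"
  shows "Delta_p u v > ereal eps \<longleftrightarrow> length u \<noteq> length v"
proof (cases "length u = length v")
  case True
  then have "Delta_p u v \<le> ereal eps"
    using Delta_p_le_if_same_length[OF _ assms(1-3)] assms(4) order_trans by fastforce
  with True show ?thesis by (simp add: not_less)
qed (simp add: Delta_p_def)

lemma measure_cball_complex:
  assumes "0 \<le> r"
  shows "measure lborel (cball (c :: complex) r) = pi * r\<^sup>2"
  using content_cball[of r c] assms by (simp add: unit_ball_vol_2)

lemma homogeneous_PPP_count_in:
  assumes "homogeneous_PPP M lam Phi" and "B \<in> sets lborel" and "bounded B"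
  shows "{w\<in>space M. count_in (Phi w) B = k} \<in> sets M"
    and "measure M {w\<in>space M. count_in (Phi w) B = k}
           = exp (- (lam * measure lborel B)) * (lam * measure lborel B) ^ k / fact k"
  using assms unfolding homogeneous_PPP_def by auto

lemma count_in_event_in_PPP_events:
  assumes "B \<in> sets lborel" and "bounded B"
  shows "{w\<in>space M. count_in (Phi w) B = k} \<in> PPP_events M Phi"
  unfolding PPP_events_def
  using assms by (intro CollectI exI[of _ 1] exI[of _ "\<lambda>_. B"] exI[of _ "\<lambda>_. k"]) auto

lemma independent_PPs_count_in:
  assumes "prob_space M" and "independent_PPs M Phi Psi"
    and "B \<in> sets lborel" "bounded B" and "C \<in> sets lborel" "bounded C"
  shows "measure M ({w\<in>space M. count_in (Phi w) B = k} \<inter> {w\<in>space M. count_in (Psi w) C = l})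
       = measure M {w\<in>space M. count_in (Phi w) B = k} * measure M {w\<in>space M. count_in (Psi w) C = l}"
  using prob_space.indep_setD[OF assms(1) assms(2)[unfolded independent_PPs_def]
      count_in_event_in_PPP_events[OF assms(3,4)] count_in_event_in_PPP_events[OF assms(5,6)]] .

lemma summable_bessel_I0_series: "summable (\<lambda>k. (x / 2) ^ (2 * k) / (fact k)\<^sup>2 :: real)"
proof (rule summable_comparison_test)
  show "summable (\<lambda>k. inverse (fact k) * ((x / 2)\<^sup>2) ^ k :: real)"
    by (rule summable_exp)
  have "norm ((x / 2) ^ (2 * k) / (fact k)\<^sup>2) \<le> inverse (fact k) * ((x / 2)\<^sup>2) ^ k" for k
  proof -
    have "norm ((x / 2) ^ (2 * k) / (fact k)\<^sup>2) = ((x / 2)\<^sup>2) ^ k / (fact k)\<^sup>2"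
      by (simp add: power_mult)
    also have "\<dots> \<le> ((x / 2)\<^sup>2) ^ k / fact k"
      by (rule divide_left_mono) (auto simp: power2_eq_square)
    finally show ?thesis
      by (simp add: field_simps)
  qed
  then show "\<exists>N. \<forall>k\<ge>N. norm ((x / 2) ^ (2 * k) / (fact k)\<^sup>2) \<le> inverse (fact k) * ((x / 2)\<^sup>2) ^ k"
    by blast
qed

lemma poisson_squares_sums_bessel_I0:
  "(\<lambda>k. (exp (- m) * m ^ k / fact k)\<^sup>2) sums (exp (- 2 * m) * bessel_I0 (2 * m))"
proof -
  have "(\<lambda>k. (exp (- m) * m ^ k / fact k)\<^sup>2)
      = (\<lambda>k. exp (- 2 * m) * ((2 * m / 2) ^ (2 * k) / (fact k)\<^sup>2))"
    by (simp add: power_mult_distrib power_divide power_mult exp_add[symmetric]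
        power2_eq_square mult_ac)
  then show ?thesis
    using sums_mult[OF summable_sums[OF summable_bessel_I0_series], of "exp (- 2 * m)" "2 * m"]
    by (simp add: bessel_I0_def)
qed

lemma (in prob_space) prob_eq_sums:
  fixes X Y :: "'a \<Rightarrow> nat"
  assumes "\<And>k. {w\<in>space M. X w = k} \<in> events" and "\<And>k. {w\<in>space M. Y w = k} \<in> events"
  shows "(\<lambda>k. prob ({w\<in>space M. X w = k} \<inter> {w\<in>space M. Y w = k}))
           sums prob {w\<in>space M. X w = Y w}"
proof -
  define F where "F k = {w\<in>space M. X w = k} \<inter> {w\<in>space M. Y w = k}" for k
  have "range F \<subseteq> events" using assms by (auto simp: F_def)
  moreover have "disjoint_family F" by (auto simp: disjoint_family_on_def F_def)
  moreover have "(\<Union>k. F k) = {w\<in>space M. X w = Y w}" by (auto simp: F_def)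
  ultimately show ?thesis
    using finite_measure_UNION[of F] by (simp add: F_def)
qed

lemma (in prob_space) prob_neq_independent_poisson:
  fixes X Y :: "'a \<Rightarrow> nat"
  assumes "\<And>k. {w\<in>space M. X w = k} \<in> events" and "\<And>k. {w\<in>space M. Y w = k} \<in> events"
    and "\<And>k. prob {w\<in>space M. X w = k} = exp (- m) * m ^ k / fact k"
    and "\<And>k. prob {w\<in>space M. Y w = k} = exp (- m) * m ^ k / fact k"
    and "\<And>k. prob ({w\<in>space M. X w = k} \<inter> {w\<in>space M. Y w = k})
               = prob {w\<in>space M. X w = k} * prob {w\<in>space M. Y w = k}"
  shows "prob {w\<in>space M. X w \<noteq> Y w} = 1 - exp (- 2 * m) * bessel_I0 (2 * m)"
proof -
  have "(\<lambda>k. (exp (- m) * m ^ k / fact k)\<^sup>2) sums prob {w\<in>space M. X w = Y w}"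
    using prob_eq_sums[OF assms(1,2)] by (simp add: assms(3-5) power2_eq_square)
  then have "prob {w\<in>space M. X w = Y w} = exp (- 2 * m) * bessel_I0 (2 * m)"
    using poisson_squares_sums_bessel_I0 sums_unique2 by blast
  moreover have "{w\<in>space M. X w = Y w} = (\<Union>k. {w\<in>space M. X w = k} \<inter> {w\<in>space M. Y w = k})"
    by auto
  then have "{w\<in>space M. X w = Y w} \<in> events"
    using assms(1,2) by auto
  moreover have "{w\<in>space M. X w \<noteq> Y w} = space M - {w\<in>space M. X w = Y w}"
    by auto
  ultimately show ?thesis
    using prob_compl by simp
qed

theorem corollary1:
  fixes M :: "'w measure" and Phi0 Phix :: "'w \<Rightarrow> complex set"
    and lam dv eps theta m :: real and x :: complex
  assumes "prob_space M"
    and "lam > 0" and "dv > 0"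
    and "m = lam * pi * dv ^ 2"
    and "eps \<ge> dv"
    and "homogeneous_PPP M lam Phi0"
    and "homogeneous_PPP M lam Phix"
    and "independent_PPs M Phi0 Phix"
  shows "measure M {w\<in>space M. Delta_p (range_vector theta dv 0 (Phi0 w))
                                         (range_vector theta dv x (Phix w)) > ereal eps}
           = measure M {w\<in>space M. num_visible dv 0 (Phi0 w) \<noteq> num_visible dv x (Phix w)} \<and>
         measure M {w\<in>space M. num_visible dv 0 (Phi0 w) \<noteq> num_visible dv x (Phix w)}
           = 1 - exp (- 2 * m) * bessel_I0 (2 * m)"
proof
  interpret prob_space M by fact
  have "Delta_p (range_vector theta dv 0 (Phi0 w)) (range_vector theta dv x (Phix w)) > ereal eps
      \<longleftrightarrow> num_visible dv 0 (Phi0 w) \<noteq> num_visible dv x (Phix w)" if "w \<in> space M" for w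
  proof -
    have "finite (visible dv 0 (Phi0 w))" "finite (visible dv x (Phix w))"
      using finite_visible_if_homogeneous_PPP[OF _ that] assms(6,7) by blast+
    then show ?thesis
      using Delta_p_gt_iff_length_neq[OF set_range_vector_subset set_range_vector_subset] assms(3,5)
      by (simp add: length_range_vector)
  qed
  then show "measure M {w\<in>space M. Delta_p (range_vector theta dv 0 (Phi0 w))
                                   (range_vector theta dv x (Phix w)) > ereal eps}
      = measure M {w\<in>space M. num_visible dv 0 (Phi0 w) \<noteq> num_visible dv x (Phix w)}"
    by (intro arg_cong[where f = "measure M"] Collect_cong) auto
  have mean: "lam * measure lborel (cball c dv) = m" for c :: complex
    using assms(3,4) measure_cball_complex[of dv c] by simp
  show "prob {w\<in>space M. num_visible dv 0 (Phi0 w) \<noteq> num_visible dv x (Phix w)}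
      = 1 - exp (- 2 * m) * bessel_I0 (2 * m)"
    unfolding num_visible_eq_count_in
    using homogeneous_PPP_count_in[OF assms(6)] homogeneous_PPP_count_in[OF assms(7)]
      independent_PPs_count_in[OF assms(1,8)]
    by (intro prob_neq_independent_poisson) (simp_all add: mean)
qed

end
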